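(* Let $\lambda>1$, $\mu>0$, $\nu>0$ with $\mu\varrho(\lambda)\le\nu$. Then $0<S_{\mu,\nu,\lambda}\le C$ for a constant $C$ depending only on $\lambda$ and $\nu$.
   Context: Let $\Pi=\{x=(x_1,x_2)\in\mathbb R^2: x_2>0\}$, and for $x=(x_1,x_2)$ write $\bar x=(x_1,-x_2)$. Let $G(x,y)=\frac{1}{2\pi}K_0(|x-y|)$ be the fundamental solution of $-\Delta+\mathrm{Id}$ on $\mathbb R^2$ ($K_0$ the modified Bessel function of the second kind of order zero). Set $G_\Pi(x,y)=G(x,y)-G(\bar x,y)$ for $x,y\in\Pi$, $\mathcal G\omega(x)=\int_\Pi G_\Pi(x,y)\omega(y)\,dy$, $E(\omega)=\frac12\int_\Pi\omega\,\mathcal G\omega\,dx$ and $I(\omega)=\int_\Pi x_2\omega\,dx$. Variational problem: for $\lambda>1,\mu>0,\nu>0$ let $\mathcal A_{\mu,\nu}=\{\omega\in L^2(\Pi):\omega\ge0,\ \int_\Pi x_2\omega\,dx=\mu,\ \int_\Pi\omega\,dx\le\nu\}$, $\mathcal E_\lambda(\omega)=E(\omega)-\frac1{2\lambda}\int_\Pi\omega^2\,dx$, $S_{\mu,\nu,\lambda}=\sup_{\omega\in\mathcal A_{\mu,\nu}}\mathcal E_\lambda(\omega)$, and $\Sigma_{\mu,\nu,\lambda}=\{\omega\in\mathcal A_{\mu,\nu}:\mathcal E_\lambda(\omega)=S_{\mu,\nu,\lambda}\}$. Lamb dipole: for $\lambda>1$ let $a=a(\lambda)$ be the smallest positive solution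 of $$a\Big(\frac{K_1'(a)}{K_1(a)}+\frac{1}{(\lambda-1)^{1/2}}\cdot\frac{J_1'((\lambda-1)^{1/2}a)}{J_1((\lambda-1)^{1/2}a)}\Big)=\frac{\lambda}{\lambda-1},$$ where $J_1$ is the Bessel function of the first kind of order one and $K_1$ the modified Bessel function of the second kind of order one (such a smallest positive solution exists). For $W>0$, in polar coordinates $x=(r\cos\theta,r\sin\theta)$, define $$\Psi_L^{\lambda,W}(x)=\begin{cases}\big(A_LJ_1((\lambda-1)^{1/2}r)+\frac{W\lambda}{\lambda-1}r\big)\sin\theta,& r\le a,\\ \frac{Wa}{K_1(a)}K_1(r)\sin\theta,& r>a,\end{cases}\qquad A_L=-\frac{Wa}{(\lambda-1)J_1((\lambda-1)^{1/2}a)},$$ and $\omega_L^{\lambda,W}=\lambda(\Psi_L^{\lambda,W}-Wx_2)_+$ on $\Pi$. Finally $\varrho(\lambda)=\frac{1}{I(\omega_L^{\lambda,1})}\int_\Pi\omega_L^{\lambda,1}\,dx$. *)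

theory Defs
  imports "HOL-Analysis.Analysis"
begin

definition half_plane :: "(real \<times> real) set" where
  "half_plane = {x. snd x > 0}"

definition reflect :: "real \<times> real \<Rightarrow> real \<times> real" where
  "reflect x = (fst x, - snd x)"

definition besselJ1 :: "real \<Rightarrow> real" where
  "besselJ1 x = (\<Sum>m. (-1)^m / (fact m * fact (m + 1)) * (x / 2) ^ (2 * m + 1))"

definition besselK0 :: "real \<Rightarrow> real" where
  "besselK0 r = (\<integral>t\<in>{0<..}. exp (- r * cosh t) \<partial>lborel)"

definition besselK1 :: "real \<Rightarrow> real" where
  "besselK1 r = (\<integral>t\<in>{0<..}. exp (- r * cosh t) * cosh t \<partial>lborel)"

definition green :: "real \<times> real \<Rightarrow> real \<times> real \<Rightarrow> real" where
  "green x y = besselK0 (dist x y) / (2 * pi)"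

definition green_half :: "real \<times> real \<Rightarrow> real \<times> real \<Rightarrow> real" where
  "green_half x y = green x y - green (reflect x) y"

definition stream_op :: "(real \<times> real \<Rightarrow> real) \<Rightarrow> real \<times> real \<Rightarrow> real" where
  "stream_op \<omega> x = (\<integral>y\<in>half_plane. green_half x y * \<omega> y \<partial>lborel)"

definition energy :: "(real \<times> real \<Rightarrow> real) \<Rightarrow> real" where
  "energy \<omega> = 1 / 2 * (\<integral>x\<in>half_plane. \<omega> x * stream_op \<omega> x \<partial>lborel)"

definition impulse :: "(real \<times> real \<Rightarrow> real) \<Rightarrow> real" where
  "impulse \<omega> = (\<integral>x\<in>half_plane. snd x * \<omega> x \<partial>lborel)"

definition admissible :: "real \<Rightarrow> real \<Rightarrow> (real \<times> real \<Rightarrow> real) set" where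
  "admissible \<mu> \<nu> = {\<omega>. \<omega> \<in> borel_measurable lborel
      \<and> set_integrable lborel half_plane (\<lambda>x. (\<omega> x)\<^sup>2)
      \<and> (\<forall>x\<in>half_plane. \<omega> x \<ge> 0)
      \<and> set_integrable lborel half_plane (\<lambda>x. snd x * \<omega> x)
      \<and> impulse \<omega> = \<mu>
      \<and> set_integrable lborel half_plane \<omega>
      \<and> (\<integral>x\<in>half_plane. \<omega> x \<partial>lborel) \<le> \<nu>}"

definition penalized_energy :: "real \<Rightarrow> (real \<times> real \<Rightarrow> real) \<Rightarrow> real" where
  "penalized_energy lam \<omega> = energy \<omega> - 1 / (2 * lam) * (\<integral>x\<in>half_plane. (\<omega> x)\<^sup>2 \<partial>lborel)"

definition S_sup :: "real \<Rightarrow> real \<Rightarrow> real \<Rightarrow> ereal" where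
  "S_sup \<mu> \<nu> lam = (SUP \<omega>\<in>admissible \<mu> \<nu>. ereal (penalized_energy lam \<omega>))"

definition lamb_eq :: "real \<Rightarrow> real \<Rightarrow> bool" where
  "lamb_eq lam a \<longleftrightarrow> besselK1 a \<noteq> 0 \<and> besselJ1 (sqrt (lam - 1) * a) \<noteq> 0 \<and>
     a * (deriv besselK1 a / besselK1 a
          + 1 / sqrt (lam - 1) * (deriv besselJ1 (sqrt (lam - 1) * a) / besselJ1 (sqrt (lam - 1) * a)))
       = lam / (lam - 1)"

definition lamb_a :: "real \<Rightarrow> real" where
  "lamb_a lam = (THE a. 0 < a \<and> lamb_eq lam a \<and> (\<forall>b. 0 < b \<and> b < a \<longrightarrow> \<not> lamb_eq lam b))"

definition lamb_A :: "real \<Rightarrow> real \<Rightarrow> real" where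
  "lamb_A lam W = - (W * lamb_a lam) / ((lam - 1) * besselJ1 (sqrt (lam - 1) * lamb_a lam))"

text \<open>sin theta = x2 / r (value 0 at the origin, where Psi vanishes anyway).\<close>

definition lamb_Psi :: "real \<Rightarrow> real \<Rightarrow> real \<times> real \<Rightarrow> real" where
  "lamb_Psi lam W x = (let r = norm x; a = lamb_a lam; s = snd x / r in
     if r \<le> a then (lamb_A lam W * besselJ1 (sqrt (lam - 1) * r) + W * lam / (lam - 1) * r) * s
     else W * a / besselK1 a * besselK1 r * s)"

definition lamb_omega :: "real \<Rightarrow> real \<Rightarrow> real \<times> real \<Rightarrow> real" where
  "lamb_omega lam W x = lam * max 0 (lamb_Psi lam W x - W * snd x)"

definition rho :: "real \<Rightarrow> real" where
  "rho lam = (\<integral>x\<in>half_plane. lamb_omega lam 1 x \<partial>lborel) / impulse (lamb_omega lam 1)"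

end

(*
  The kernel g(z) = K0(|z|) / (2 pi) of -Laplace + 1 is a probability density on the plane
  (Fubini reduces its mass to the integrals of exp(-c|z|) and of 1/cosh^2), and
  G_Pi(x, y) <= g(x - y).

  Upper bound: on a small ball B_d the kernel carries mass below 1/(2 lambda), and off B_d it
  is at most K0(d) / (2 pi).  Hence 2 E(omega) <= (1/lambda) |omega|_2^2 + K0(d)/(2 pi) nu^2,
  and the penalty term absorbs the first summand.

  Lower bound: take a uniform patch omega = c 1_Q on a square Q far above the boundary.  For
  x at distance at least r from the edge of Q, the part of g(x - .) lying in Q has mass at least
  g(B_r), while the mirror image of Q is at distance at least r, so the subtracted image term
  has mass at most g(complement of B_r).  With g(complement of B_r) small and the side of Q
  large compared with r, E(omega) exceeds |omega|_2^2 / (2 lambda).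
*)

theory Submission
  imports Defs "HOL-Real_Asymp.Real_Asymp"
begin

lemma nn_integral_lborel_translate:
  fixes f :: "'a::euclidean_space \<Rightarrow> ennreal"
  assumes [measurable]: "f \<in> borel_measurable borel"
  shows "(\<integral>\<^sup>+y. f (y + c) \<partial>lborel) = integral\<^sup>N lborel f"
  using nn_integral_distr[of "(+) c" lborel borel f]
  by (simp add: lborel_distr_plus add.commute)

lemma nn_integral_lborel_reflect_translate:
  fixes f :: "'a::euclidean_space \<Rightarrow> ennreal"
  assumes [measurable]: "f \<in> borel_measurable borel"
  shows "(\<integral>\<^sup>+y. f (x - y) \<partial>lborel) = integral\<^sup>N lborel f"
proof -
  have lborel_eq: "(lborel :: 'a measure) = distr lborel borel (\<lambda>y. x - y)"
    using lborel_affine[of "-1" x] by (simp add: density_1)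
  have "integral\<^sup>N lborel f = (\<integral>\<^sup>+z. f z \<partial>distr lborel borel (\<lambda>y. x - y))"
    by (subst lborel_eq[symmetric]) simp
  also have "\<dots> = (\<integral>\<^sup>+y. f (x - y) \<partial>lborel)"
    by (subst nn_integral_distr) auto
  finally show ?thesis ..
qed

lemma
  fixes f g :: "'a::euclidean_space \<Rightarrow> ennreal"
  assumes [measurable]: "f \<in> borel_measurable borel" "g \<in> borel_measurable borel"
  shows nn_integral_convolution:
      "(\<integral>\<^sup>+x. (\<integral>\<^sup>+y. f x * g (x - y) \<partial>lborel) \<partial>lborel) = integral\<^sup>N lborel f * integral\<^sup>N lborel g"
    and nn_integral_convolution':
      "(\<integral>\<^sup>+x. (\<integral>\<^sup>+y. f y * g (x - y) \<partial>lborel) \<partial>lborel) = integral\<^sup>N lborel f * integral\<^sup>N lborel g"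
proof -
  show "(\<integral>\<^sup>+x. (\<integral>\<^sup>+y. f x * g (x - y) \<partial>lborel) \<partial>lborel) = integral\<^sup>N lborel f * integral\<^sup>N lborel g"
    by (simp add: nn_integral_cmult nn_integral_multc nn_integral_lborel_reflect_translate)
  have "(\<integral>\<^sup>+x. f y * g (x - y) \<partial>lborel) = f y * integral\<^sup>N lborel g" for y
    using nn_integral_lborel_translate[of g "- y"] by (subst nn_integral_cmult) simp_all
  then show "(\<integral>\<^sup>+x. (\<integral>\<^sup>+y. f y * g (x - y) \<partial>lborel) \<partial>lborel) = integral\<^sup>N lborel f * integral\<^sup>N lborel g"
    by (subst lborel_pair.Fubini') (simp_all add: nn_integral_multc)
qed

lemma ennreal_integral_le_nn_integral: "ennreal (integral\<^sup>L M f) \<le> (\<integral>\<^sup>+x. ennreal (f x) \<partial>M)"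
proof (cases "(\<integral>\<^sup>+x. ennreal (f x) \<partial>M)" rule: ennreal_cases)
  case (real r)
  then show ?thesis using integral_real_bounded[of r M f] by (simp add: ennreal_leI)
qed simp

lemma set_integrable_bounded:
  fixes f :: "'a \<Rightarrow> real"
  assumes "A \<in> sets M" "emeasure M A < \<infinity>" "f \<in> borel_measurable M" "\<And>x. x \<in> A \<Longrightarrow> \<bar>f x\<bar> \<le> B"
  shows "set_integrable M A f"
proof (rule set_integrable_bound)
  show "set_integrable M A (\<lambda>_. B)"
    using assms(1,2) by (simp add: set_integrable_def)
  show "AE x in M. x \<in> A \<longrightarrow> norm (f x) \<le> norm B"
    using assms(4) by (auto intro!: AE_I2 order_trans[OF _ abs_ge_self])
qed (use assms(1,3) in \<open>simp add: set_borel_measurable_def\<close>)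

lemma
  fixes f :: "'a \<Rightarrow> real"
  assumes "Q \<subseteq> A"
  shows set_integrable_mult_indicator_subset: "set_integrable M A (\<lambda>x. f x * indicator Q x) \<longleftrightarrow> set_integrable M Q f"
    and set_integral_mult_indicator_subset: "(\<integral>x\<in>A. f x * indicator Q x \<partial>M) = (\<integral>x\<in>Q. f x \<partial>M)"
proof -
  have "(\<lambda>x. indicator A x *\<^sub>R (f x * indicator Q x)) = (\<lambda>x. indicator Q x *\<^sub>R f x)"
    using assms by (intro ext) (auto simp: indicator_def)
  then show "set_integrable M A (\<lambda>x. f x * indicator Q x) \<longleftrightarrow> set_integrable M Q f"
    and "(\<integral>x\<in>A. f x * indicator Q x \<partial>M) = (\<integral>x\<in>Q. f x \<partial>M)"
    by (simp_all add: set_integrable_def set_lebesgue_integral_def)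
qed

lemma (in finite_measure) exists_measure_less_of_decseq:
  assumes "range A \<subseteq> sets M" "decseq A" "measure M (\<Inter>i. A i) = 0" "\<epsilon> > 0"
  shows "\<exists>i. measure M (A i) < \<epsilon>"
proof -
  have "(\<lambda>i. measure M (A i)) \<longlonglongrightarrow> 0"
    using finite_Lim_measure_decseq[OF assms(1,2)] assms(3) by simp
  from order_tendstoD(2)[OF this assms(4)] show ?thesis
    by (auto simp: eventually_sequentially)
qed

lemma ennreal_product_split_le:
  fixes a b \<kappa> M :: real
  assumes "0 \<le> a" "0 \<le> b" "z \<notin> S \<Longrightarrow> \<kappa> \<le> M"
  shows "ennreal a * (ennreal \<kappa> * ennreal b)
    \<le> ennreal (a\<^sup>2) * (ennreal \<kappa> * indicator S z) + ennreal (b\<^sup>2) * (ennreal \<kappa> * indicator S z)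
      + ennreal a * (ennreal M * ennreal b)"
proof (cases "z \<in> S")
  case True
  have "a * b \<le> a\<^sup>2 + b\<^sup>2"
    using mult_nonneg_nonneg[OF assms(1,2)] zero_le_power2[of "a - b"] unfolding power2_diff by linarith
  then have "ennreal (a * b) * ennreal \<kappa> \<le> ennreal (a\<^sup>2 + b\<^sup>2) * ennreal \<kappa>"
    by (intro mult_right_mono ennreal_leI) auto
  then have "ennreal a * (ennreal \<kappa> * ennreal b) \<le> ennreal (a\<^sup>2 + b\<^sup>2) * ennreal \<kappa>"
    using assms(1) by (simp add: ennreal_mult' mult_ac)
  also have "\<dots> = ennreal (a\<^sup>2) * (ennreal \<kappa> * indicator S z) + ennreal (b\<^sup>2) * (ennreal \<kappa> * indicator S z)"
    using True by (simp add: ennreal_plus distrib_right)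
  finally show ?thesis
    by (rule order_trans) (rule add_increasing2[OF zero_le order_refl])
next
  case False
  then have "ennreal a * (ennreal \<kappa> * ennreal b) \<le> ennreal a * (ennreal M * ennreal b)"
    using assms(3) by (intro mult_left_mono mult_right_mono ennreal_leI) auto
  then show ?thesis
    by (rule order_trans) (rule add_increasing[OF zero_le order_refl])
qed

lemma nn_integral_quadratic_form_le:
  fixes k w :: "'a::euclidean_space \<Rightarrow> real"
  assumes [measurable]: "k \<in> borel_measurable borel" "w \<in> borel_measurable borel" "S \<in> sets borel"
    and w_nonneg: "\<And>x. w x \<ge> 0" and k_le: "\<And>z. z \<notin> S \<Longrightarrow> k z \<le> M"
  shows "(\<integral>\<^sup>+x. ennreal (w x) * (\<integral>\<^sup>+y. ennreal (k (x - y)) * ennreal (w y) \<partial>lborel) \<partial>lborel)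
    \<le> 2 * (\<integral>\<^sup>+z\<in>S. ennreal (k z) \<partial>lborel) * (\<integral>\<^sup>+x. ennreal ((w x)\<^sup>2) \<partial>lborel)
      + ennreal M * (\<integral>\<^sup>+x. ennreal (w x) \<partial>lborel)\<^sup>2"
proof -
  define kS where "kS z = ennreal (k z) * indicator S z" for z
  define K where "K = (\<integral>\<^sup>+z. kS z \<partial>lborel)"
  define I1 where "I1 = (\<integral>\<^sup>+x. ennreal (w x) \<partial>lborel)"
  define I2 where "I2 = (\<integral>\<^sup>+x. ennreal ((w x)\<^sup>2) \<partial>lborel)"
  have [measurable]: "kS \<in> borel_measurable borel" unfolding kS_def[abs_def] by measurable
  have pointwise: "ennreal (w x) * (ennreal (k (x - y)) * ennreal (w y))
      \<le> ennreal ((w x)\<^sup>2) * kS (x - y) + ennreal ((w y)\<^sup>2) * kS (x - y) + ennreal (w x) * (ennreal M * ennreal (w y))"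
    for x y
    unfolding kS_def using ennreal_product_split_le[OF w_nonneg w_nonneg k_le] .
  have "(\<integral>\<^sup>+x. ennreal (w x) * (\<integral>\<^sup>+y. ennreal (k (x - y)) * ennreal (w y) \<partial>lborel) \<partial>lborel)
      = (\<integral>\<^sup>+x. (\<integral>\<^sup>+y. ennreal (w x) * (ennreal (k (x - y)) * ennreal (w y)) \<partial>lborel) \<partial>lborel)"
    by (intro nn_integral_cong nn_integral_cmult[symmetric]) measurable
  also have "\<dots> \<le> (\<integral>\<^sup>+x. (\<integral>\<^sup>+y. ennreal ((w x)\<^sup>2) * kS (x - y) + ennreal ((w y)\<^sup>2) * kS (x - y)
      + ennreal (w x) * (ennreal M * ennreal (w y)) \<partial>lborel) \<partial>lborel)"
    by (intro nn_integral_mono pointwise)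
  also have "\<dots> = (\<integral>\<^sup>+x. (\<integral>\<^sup>+y. ennreal ((w x)\<^sup>2) * kS (x - y) \<partial>lborel) \<partial>lborel)
        + (\<integral>\<^sup>+x. (\<integral>\<^sup>+y. ennreal ((w y)\<^sup>2) * kS (x - y) \<partial>lborel) \<partial>lborel)
        + (\<integral>\<^sup>+x. (\<integral>\<^sup>+y. ennreal (w x) * (ennreal M * ennreal (w y)) \<partial>lborel) \<partial>lborel)"
    by (simp add: nn_integral_add)
  also have "(\<integral>\<^sup>+x. (\<integral>\<^sup>+y. ennreal ((w x)\<^sup>2) * kS (x - y) \<partial>lborel) \<partial>lborel) = I2 * K"
    unfolding I2_def K_def by (rule nn_integral_convolution[of "\<lambda>x. ennreal ((w x)\<^sup>2)" kS]) measurable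
  also have "(\<integral>\<^sup>+x. (\<integral>\<^sup>+y. ennreal ((w y)\<^sup>2) * kS (x - y) \<partial>lborel) \<partial>lborel) = I2 * K"
    unfolding I2_def K_def by (rule nn_integral_convolution'[of "\<lambda>x. ennreal ((w x)\<^sup>2)" kS]) measurable
  also have "(\<integral>\<^sup>+x. (\<integral>\<^sup>+y. ennreal (w x) * (ennreal M * ennreal (w y)) \<partial>lborel) \<partial>lborel) = ennreal M * I1\<^sup>2"
    by (simp add: nn_integral_cmult nn_integral_multc I1_def power2_eq_square mult_ac)
  also have "I2 * K + I2 * K + ennreal M * I1\<^sup>2 = 2 * K * I2 + ennreal M * I1\<^sup>2"
    by (simp add: mult_2 mult_2_right distrib_left mult.commute)
  finally show ?thesis
    unfolding K_def I1_def I2_def kS_def .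
qed

section \<open>Elementary integrals\<close>

lemma borel_measurable_cosh [measurable]: "(cosh :: real \<Rightarrow> real) \<in> borel_measurable borel"
  by (intro borel_measurable_continuous_onI continuous_intros)

lemma nn_integral_exp_neg_atLeast:
  fixes c r :: real assumes c: "c > 0"
  shows "(\<integral>\<^sup>+s\<in>{r..}. ennreal (exp (- c * s)) \<partial>lborel) = ennreal (exp (- c * r) / c)"
proof -
  have "(\<integral>\<^sup>+s\<in>{r..}. ennreal (exp (- c * s)) \<partial>lborel)
      = ennreal (0 - (- exp (- c * r) / c))"
    by (rule nn_integral_FTC_atLeast) (use c in \<open>auto intro!: derivative_eq_intros, real_asymp\<close>)
  then show ?thesis by simp
qed

lemma nn_integral_sq_exp_neg:
  fixes c :: real assumes c: "c > 0"
  shows "(\<integral>\<^sup>+s\<in>{0..}. ennreal (s\<^sup>2 * exp (- c * s)) \<partial>lborel) = ennreal (2 / c ^ 3)"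
proof -
  let ?F = "\<lambda>s. - exp (- c * s) * (s\<^sup>2 / c + 2 * s / c\<^sup>2 + 2 / c ^ 3)"
  have "(\<integral>\<^sup>+s\<in>{0..}. ennreal (s\<^sup>2 * exp (- c * s)) \<partial>lborel) = ennreal (0 - ?F 0)"
    by (rule nn_integral_FTC_atLeast)
      (use c in \<open>auto intro!: derivative_eq_intros simp: field_simps power2_eq_square power3_eq_cube, real_asymp\<close>)
  then show ?thesis by simp
qed

lemma nn_integral_sech_sq: "(\<integral>\<^sup>+t\<in>{0..}. ennreal (1 / (cosh t)\<^sup>2) \<partial>lborel) = 1"
proof -
  have "(\<integral>\<^sup>+t\<in>{0..}. ennreal (1 / (cosh t)\<^sup>2) \<partial>lborel) = ennreal (1 - tanh 0)"
  proof (rule nn_integral_FTC_atLeast)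
    show "(tanh has_real_derivative 1 / (cosh x)\<^sup>2) (at x)" for x :: real
    proof -
      have "cosh x \<noteq> 0" using cosh_real_pos[of x] by simp
      then have "1 - (tanh x)\<^sup>2 = ((cosh x)\<^sup>2 - (sinh x)\<^sup>2) / (cosh x)\<^sup>2"
        by (simp add: tanh_def field_simps power_divide)
      then have "1 - (tanh x)\<^sup>2 = 1 / (cosh x)\<^sup>2"
        using cosh_square_eq[of x] by simp
      moreover have "(tanh has_real_derivative 1 - (tanh x)\<^sup>2) (at x)"
        using \<open>cosh x \<noteq> 0\<close> by (auto intro!: derivative_eq_intros)
      ultimately show ?thesis by simp
    qed
  qed (auto intro: tanh_real_at_top)
  then show ?thesis by simp
qed

text \<open>Layer cake: \<open>exp (- c * norm z)\<close> is the integral of \<open>c * exp (- c * s)\<close> over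
  \<open>s \<ge> norm z\<close>, and the disc of radius \<open>s\<close> has area \<open>pi * s\<^sup>2\<close>.\<close>

lemma nn_integral_exp_neg_norm:
  fixes c :: real assumes c: "c > 0"
  shows "(\<integral>\<^sup>+z. ennreal (exp (- c * norm (z :: real \<times> real))) \<partial>lborel) = ennreal (2 * pi / c\<^sup>2)"
proof -
  have layer: "ennreal (exp (- c * norm z)) = (\<integral>\<^sup>+s. ennreal (c * exp (- c * s)) * indicator (cball 0 s) z \<partial>lborel)"
    for z :: "real \<times> real"
  proof -
    have "(\<integral>\<^sup>+s. ennreal (c * exp (- c * s)) * indicator (cball 0 s) z \<partial>lborel)
        = ennreal c * (\<integral>\<^sup>+s\<in>{norm z..}. ennreal (exp (- c * s)) \<partial>lborel)"
      using c by (subst nn_integral_cmult[symmetric])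
        (auto intro!: nn_integral_cong simp: ennreal_mult indicator_def mult.assoc)
    also have "\<dots> = ennreal (exp (- c * norm z))"
      using c by (subst nn_integral_exp_neg_atLeast[OF c]) (simp add: ennreal_mult[symmetric])
    finally show ?thesis ..
  qed
  have "(\<integral>\<^sup>+z. ennreal (exp (- c * norm (z :: real \<times> real))) \<partial>lborel)
      = (\<integral>\<^sup>+s. (\<integral>\<^sup>+z. ennreal (c * exp (- c * s)) * indicator (cball 0 s) (z :: real \<times> real) \<partial>lborel) \<partial>lborel)"
  proof -
    have "Measurable.pred (borel \<Otimes>\<^sub>M borel) (\<lambda>p :: (real \<times> real) \<times> real. norm (fst p) \<le> snd p)"
      by measurable
    then have "{p :: (real \<times> real) \<times> real. norm (fst p) \<le> snd p} \<in> sets (borel \<Otimes>\<^sub>M borel)"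
      by (simp add: pred_def space_pair_measure)
    then show ?thesis unfolding layer
      by (intro lborel_pair.Fubini'[symmetric]) (simp add: indicator_def mem_cball dist_norm, measurable)
  qed
  also have "\<dots> = (\<integral>\<^sup>+s\<in>{0..}. ennreal (c * pi) * ennreal (s\<^sup>2 * exp (- c * s)) \<partial>lborel)"
  proof (intro nn_integral_cong)
    fix s :: real
    show "(\<integral>\<^sup>+z. ennreal (c * exp (- c * s)) * indicator (cball 0 s) (z :: real \<times> real) \<partial>lborel)
        = ennreal (c * pi) * ennreal (s\<^sup>2 * exp (- c * s)) * indicator {0..} s"
    proof (cases "s \<ge> 0")
      case True
      then show ?thesis using c
        by (subst nn_integral_cmult_indicator)
          (auto simp: emeasure_cball unit_ball_vol_2 ennreal_mult'[symmetric] power2_eq_square mult_ac)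
    qed simp
  qed
  also have "\<dots> = ennreal (c * pi) * (\<integral>\<^sup>+s\<in>{0..}. ennreal (s\<^sup>2 * exp (- c * s)) \<partial>lborel)"
    by (subst nn_integral_cmult[symmetric]) (auto simp: mult.assoc)
  also have "\<dots> = ennreal (2 * pi / c\<^sup>2)"
    unfolding nn_integral_sq_exp_neg[OF c] using c
    by (simp add: ennreal_mult'[symmetric] power2_eq_square power3_eq_cube)
  finally show ?thesis .
qed

section \<open>The Bessel kernel\<close>

lemma nn_integral_besselK0:
  fixes r :: real assumes r: "r > 0"
  shows "ennreal (besselK0 r) = (\<integral>\<^sup>+t\<in>{0<..}. ennreal (exp (- r * cosh t)) \<partial>lborel)"
proof -
  have "(\<integral>\<^sup>+t\<in>{0<..}. ennreal (exp (- r * cosh t)) \<partial>lborel)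
      \<le> (\<integral>\<^sup>+t\<in>{0..}. ennreal (exp (- (r / 2) * t)) \<partial>lborel)"
  proof (intro nn_integral_mono)
    fix t :: real
    have "2 * cosh t = exp t + exp (- t)"
      by (simp add: cosh_def)
    then have "t \<le> 2 * cosh t"
      using exp_ge_add_one_self[of t] exp_gt_zero[of "- t"] by linarith
    then have "exp (- r * cosh t) \<le> exp (- (r / 2) * t)"
      using r by (simp add: mult_left_mono)
    then show "ennreal (exp (- r * cosh t)) * indicator {0<..} t \<le> ennreal (exp (- (r / 2) * t)) * indicator {0..} t"
      by (simp add: indicator_def)
  qed
  also have "\<dots> < \<infinity>"
    using r nn_integral_exp_neg_atLeast[of "r / 2" 0] by simp
  finally have "integrable lborel (\<lambda>t. indicator {0<..} t * exp (- r * cosh t))"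
    by (intro integrableI_nonneg) (auto simp: mult.commute indicator_mult_ennreal)
  then have "(\<integral>\<^sup>+t. ennreal (indicator {0<..} t * exp (- r * cosh t)) \<partial>lborel) = ennreal (besselK0 r)"
    unfolding besselK0_def set_lebesgue_integral_def real_scaleR_def
    by (rule nn_integral_eq_integral) simp
  then show ?thesis
    by (simp add: indicator_mult_ennreal[symmetric] mult.commute)
qed

lemma besselK0_nonneg: "besselK0 r \<ge> 0"
  unfolding besselK0_def set_lebesgue_integral_def
  by (intro integral_nonneg_AE) (auto simp: indicator_def)

lemma besselK0_antimono:
  fixes r d :: real assumes "0 < d" "d \<le> r"
  shows "besselK0 r \<le> besselK0 d"
proof -
  have "ennreal (besselK0 r) \<le> ennreal (besselK0 d)"
    using assms by (simp add: nn_integral_besselK0 mult_right_mono indicator_def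
        cosh_real_pos[THEN less_imp_le] nn_integral_mono)
  then show ?thesis using besselK0_nonneg[of d] by simp
qed

lemma borel_measurable_besselK0 [measurable]: "besselK0 \<in> borel_measurable borel"
  unfolding besselK0_def[abs_def] set_lebesgue_integral_def by measurable

lemma nn_integral_besselK0_norm:
  "(\<integral>\<^sup>+z. ennreal (besselK0 (norm (z :: real \<times> real))) \<partial>lborel) = ennreal (2 * pi)"
proof -
  have "(\<integral>\<^sup>+z. ennreal (besselK0 (norm (z :: real \<times> real))) \<partial>lborel)
      = (\<integral>\<^sup>+z. (\<integral>\<^sup>+t. ennreal (exp (- cosh t * norm (z :: real \<times> real))) * indicator {0<..} t \<partial>lborel) \<partial>lborel)"
    by (intro nn_integral_cong_AE eventually_mono[OF AE_lborel_singleton[of 0]])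
      (simp add: nn_integral_besselK0 mult.commute)
  also have "\<dots> = (\<integral>\<^sup>+t\<in>{0<..}. (\<integral>\<^sup>+z. ennreal (exp (- cosh t * norm (z :: real \<times> real))) \<partial>lborel) \<partial>lborel)"
    by (subst lborel_pair.Fubini') (auto intro!: nn_integral_cong nn_integral_multc)
  also have "\<dots> = (\<integral>\<^sup>+t\<in>{0..}. ennreal (2 * pi) * ennreal (1 / (cosh t)\<^sup>2) \<partial>lborel)"
  proof -
    have inner: "(\<integral>\<^sup>+z. ennreal (exp (- cosh t * norm (z :: real \<times> real))) \<partial>lborel)
        = ennreal (2 * pi) * ennreal (1 / (cosh t)\<^sup>2)" for t
      using nn_integral_exp_neg_norm[OF cosh_real_pos[of t]] by (simp add: ennreal_mult'[symmetric])
    show ?thesis unfolding inner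
      by (intro nn_integral_cong_AE eventually_mono[OF AE_lborel_singleton[of 0]]) (auto simp: indicator_def)
  qed
  also have "\<dots> = ennreal (2 * pi)"
    unfolding mult.assoc by (subst nn_integral_cmult) (simp_all add: nn_integral_sech_sq)
  finally show ?thesis .
qed

definition green_kernel :: "real \<times> real \<Rightarrow> real" where
  "green_kernel z = besselK0 (norm z) / (2 * pi)"

lemma green_eq_green_kernel: "green x y = green_kernel (x - y)"
  by (simp add: green_def green_kernel_def dist_norm)

lemma green_kernel_nonneg: "green_kernel z \<ge> 0"
  by (simp add: green_kernel_def besselK0_nonneg)

lemma borel_measurable_green_kernel [measurable]: "green_kernel \<in> borel_measurable borel"
  unfolding green_kernel_def[abs_def] by measurable

lemma green_kernel_le:
  assumes "0 < d" "d \<le> norm z"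
  shows "green_kernel z \<le> besselK0 d / (2 * pi)"
  using besselK0_antimono[OF assms] by (simp add: green_kernel_def divide_right_mono)

lemma nn_integral_green_kernel: "(\<integral>\<^sup>+z. ennreal (green_kernel z) \<partial>lborel) = 1"
proof -
  have "(\<integral>\<^sup>+z. ennreal (green_kernel z) \<partial>lborel)
      = ennreal (1 / (2 * pi)) * (\<integral>\<^sup>+z. ennreal (besselK0 (norm (z :: real \<times> real))) \<partial>lborel)"
    by (subst nn_integral_cmult[symmetric])
      (auto intro!: nn_integral_cong simp: green_kernel_def ennreal_mult'[symmetric] besselK0_nonneg)
  then show ?thesis
    by (simp add: nn_integral_besselK0_norm ennreal_mult'[symmetric])
qed

definition green_measure :: "(real \<times> real) measure" where
  "green_measure = density lborel (\<lambda>z. ennreal (green_kernel z))"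

lemma sets_green_measure [simp]: "sets green_measure = sets borel"
  by (simp add: green_measure_def)

lemma space_green_measure [simp]: "space green_measure = UNIV"
  by (simp add: green_measure_def)

lemma emeasure_green_measure:
  "A \<in> sets borel \<Longrightarrow> emeasure green_measure A = (\<integral>\<^sup>+z\<in>A. ennreal (green_kernel z) \<partial>lborel)"
  by (simp add: green_measure_def emeasure_density)

lemma emeasure_green_measure_UNIV: "emeasure green_measure UNIV = 1"
  by (simp add: emeasure_green_measure nn_integral_green_kernel)

interpretation green_measure: finite_measure green_measure
  by (rule finite_measureI) (simp add: emeasure_green_measure_UNIV)

lemma measure_green_measure_le_1: "measure green_measure A \<le> 1"
  using green_measure.bounded_measure[of A] emeasure_green_measure_UNIV by (simp add: measure_def)

lemma measure_green_measure_compl: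
  assumes "A \<in> sets borel"
  shows "measure green_measure (- A) = 1 - measure green_measure A"
proof -
  have "measure green_measure UNIV = 1"
    by (simp add: measure_def emeasure_green_measure_UNIV)
  then show ?thesis
    using green_measure.finite_measure_compl[of A] assms by (simp add: Compl_eq_Diff_UNIV)
qed

lemma green_measure_small_ball:
  assumes "\<epsilon> > 0"
  shows "\<exists>d>0. measure green_measure (ball 0 d) < \<epsilon>"
proof -
  have "(\<Inter>i. ball 0 (1 / Suc i)) = {0 :: real \<times> real}"
  proof safe
    fix z :: "real \<times> real" assume z: "z \<in> (\<Inter>i. ball 0 (1 / Suc i))"
    show "z = 0"
    proof (rule ccontr)
      assume "z \<noteq> 0"
      then obtain i :: nat where "1 / Suc i < norm z"
        by (metis nat_approx_posE zero_less_norm_iff)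
      moreover have "z \<in> ball 0 (1 / Suc i)" using z by blast
      ultimately show False by simp
    qed
  qed auto
  moreover have "measure green_measure {0} = 0"
    by (simp add: measure_def emeasure_green_measure)
  moreover have "decseq (\<lambda>i. ball (0 :: real \<times> real) (1 / Suc i))"
    by (intro decseq_SucI subset_ball) (simp add: frac_le)
  moreover have "range (\<lambda>i. ball (0 :: real \<times> real) (1 / Suc i)) \<subseteq> sets green_measure"
    by auto
  ultimately obtain i where "measure green_measure (ball 0 (1 / Suc i)) < \<epsilon>"
    using green_measure.exists_measure_less_of_decseq assms by metis
  then show ?thesis by (intro exI[of _ "1 / Suc i"]) auto
qed

lemma green_measure_small_tail:
  assumes "\<epsilon> > 0"
  shows "\<exists>r>0. measure green_measure (- ball 0 r) < \<epsilon>"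
proof -
  have "(\<Inter>i. - ball 0 (Suc i)) = ({} :: (real \<times> real) set)"
  proof safe
    fix z :: "real \<times> real" assume z: "z \<in> (\<Inter>i. - ball 0 (Suc i))"
    obtain i :: nat where "norm z < i" using reals_Archimedean2 by blast
    moreover have "z \<in> - ball 0 (Suc i)" using z by blast
    ultimately show "z \<in> {}" by simp
  qed
  moreover have "decseq (\<lambda>i. - ball (0 :: real \<times> real) (Suc i))"
    by (intro decseq_SucI) auto
  moreover have "range (\<lambda>i. - ball (0 :: real \<times> real) (Suc i)) \<subseteq> sets green_measure"
    by auto
  ultimately obtain i where "measure green_measure (- ball 0 (Suc i)) < \<epsilon>"
    using green_measure.exists_measure_less_of_decseq assms by (metis measure_empty)
  then show ?thesis by (intro exI[of _ "real (Suc i)"]) simp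
qed

lemma nn_integral_green_conv:
  assumes [measurable]: "S \<in> sets borel"
  shows "(\<integral>\<^sup>+y. ennreal (indicator S y * green_kernel (p - y)) \<partial>lborel)
    = emeasure green_measure {z. p - z \<in> S}"
proof -
  have [measurable]: "{z. p - z \<in> S} \<in> sets borel" by measurable
  have "(\<integral>\<^sup>+y. ennreal (indicator S y * green_kernel (p - y)) \<partial>lborel)
      = (\<integral>\<^sup>+y. ennreal (green_kernel (p - y)) * indicator {z. p - z \<in> S} (p - y) \<partial>lborel)"
    by (intro nn_integral_cong) (simp add: indicator_def)
  also have "\<dots> = (\<integral>\<^sup>+z\<in>{z. p - z \<in> S}. ennreal (green_kernel z) \<partial>lborel)"
    by (rule nn_integral_lborel_reflect_translate) measurable
  finally show ?thesis by (simp add: emeasure_green_measure)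
qed

lemma
  assumes [measurable]: "S \<in> sets borel"
  shows set_integrable_green_conv: "set_integrable lborel S (\<lambda>y. green_kernel (p - y))"
    and set_integral_green_conv: "(\<integral>y\<in>S. green_kernel (p - y) \<partial>lborel) = measure green_measure {z. p - z \<in> S}"
proof -
  have fin: "(\<integral>\<^sup>+y. ennreal (indicator S y * green_kernel (p - y)) \<partial>lborel) < \<infinity>"
    by (simp add: nn_integral_green_conv less_top[symmetric])
  show int: "set_integrable lborel S (\<lambda>y. green_kernel (p - y))"
    unfolding set_integrable_def using fin green_kernel_nonneg by (intro integrableI_nonneg) auto
  show "(\<integral>y\<in>S. green_kernel (p - y) \<partial>lborel) = measure green_measure {z. p - z \<in> S}"
    using nn_integral_eq_integral[OF int[unfolded set_integrable_def]] green_kernel_nonneg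
    by (simp add: set_lebesgue_integral_def nn_integral_green_conv measure_def)
qed

section \<open>An upper bound for the penalized energy\<close>

lemma half_plane_sets [measurable]: "half_plane \<in> sets borel"
  unfolding half_plane_def by (intro borel_open open_Collect_less continuous_intros)

lemma green_half_le_green_kernel: "green_half x y \<le> green_kernel (x - y)"
  using green_kernel_nonneg[of "reflect x - y"] by (simp add: green_half_def green_eq_green_kernel)

lemma stream_op_le:
  assumes "\<forall>x\<in>half_plane. \<omega> x \<ge> 0"
  shows "ennreal (stream_op \<omega> x)
    \<le> (\<integral>\<^sup>+y. ennreal (green_kernel (x - y)) * ennreal (indicator half_plane y * \<omega> y) \<partial>lborel)"
proof -
  have "ennreal (stream_op \<omega> x) \<le> (\<integral>\<^sup>+y. ennreal (indicator half_plane y * (green_half x y * \<omega> y)) \<partial>lborel)"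
    unfolding stream_op_def set_lebesgue_integral_def real_scaleR_def by (rule ennreal_integral_le_nn_integral)
  also have "\<dots> \<le> (\<integral>\<^sup>+y. ennreal (green_kernel (x - y)) * ennreal (indicator half_plane y * \<omega> y) \<partial>lborel)"
  proof (intro nn_integral_mono)
    fix y
    show "ennreal (indicator half_plane y * (green_half x y * \<omega> y))
        \<le> ennreal (green_kernel (x - y)) * ennreal (indicator half_plane y * \<omega> y)"
      using assms green_half_le_green_kernel[of x y] green_kernel_nonneg[of "x - y"]
      by (auto simp: indicator_def ennreal_mult'[symmetric] intro!: ennreal_leI mult_right_mono)
  qed
  finally show ?thesis .
qed

lemma ennreal_twice_energy_le:
  assumes "\<forall>x\<in>half_plane. \<omega> x \<ge> 0"
  defines "w \<equiv> \<lambda>x. indicator half_plane x * \<omega> x"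
  shows "ennreal (2 * energy \<omega>)
    \<le> (\<integral>\<^sup>+x. ennreal (w x) * (\<integral>\<^sup>+y. ennreal (green_kernel (x - y)) * ennreal (w y) \<partial>lborel) \<partial>lborel)"
proof -
  have "ennreal (2 * energy \<omega>) \<le> (\<integral>\<^sup>+x. ennreal (w x * stream_op \<omega> x) \<partial>lborel)"
    using ennreal_integral_le_nn_integral[of lborel "\<lambda>x. w x * stream_op \<omega> x"]
    by (simp add: energy_def set_lebesgue_integral_def w_def mult.assoc)
  also have "\<dots> \<le> (\<integral>\<^sup>+x. ennreal (w x) * (\<integral>\<^sup>+y. ennreal (green_kernel (x - y)) * ennreal (w y) \<partial>lborel) \<partial>lborel)"
  proof (intro nn_integral_mono)
    fix x
    have w_nonneg: "w x \<ge> 0" using assms by (simp add: w_def indicator_def)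
    then have "ennreal (w x * stream_op \<omega> x) \<le> ennreal (w x) * ennreal (stream_op \<omega> x)"
      by (cases "stream_op \<omega> x \<ge> 0") (simp_all add: ennreal_mult mult_nonneg_nonpos ennreal_neg)
    also have "\<dots> \<le> ennreal (w x) * (\<integral>\<^sup>+y. ennreal (green_kernel (x - y)) * ennreal (w y) \<partial>lborel)"
      using stream_op_le[OF assms(1), of x] by (intro mult_left_mono) (auto simp: w_def)
    finally show "ennreal (w x * stream_op \<omega> x)
        \<le> ennreal (w x) * (\<integral>\<^sup>+y. ennreal (green_kernel (x - y)) * ennreal (w y) \<partial>lborel)" .
  qed
  finally show ?thesis .
qed

lemma energy_le:
  assumes adm: "\<omega> \<in> admissible mu nu" and d: "d > 0"
  shows "energy \<omega> \<le> measure green_measure (ball 0 d) * (\<integral>x\<in>half_plane. (\<omega> x)\<^sup>2 \<partial>lborel)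
    + besselK0 d / (4 * pi) * nu\<^sup>2"
proof -
  define w where "w x = indicator half_plane x * \<omega> x" for x
  define L2 where "L2 = (\<integral>x\<in>half_plane. (\<omega> x)\<^sup>2 \<partial>lborel)"
  define m where "m = (\<integral>x\<in>half_plane. \<omega> x \<partial>lborel)"
  define M where "M = besselK0 d / (2 * pi)"
  have [measurable]: "\<omega> \<in> borel_measurable borel" and \<omega>_nonneg: "\<forall>x\<in>half_plane. \<omega> x \<ge> 0"
    and "m \<le> nu" using adm by (auto simp: admissible_def m_def)
  have [measurable]: "w \<in> borel_measurable borel" unfolding w_def[abs_def] by measurable
  have w_nonneg: "w x \<ge> 0" for x using \<omega>_nonneg by (simp add: w_def indicator_def)
  have "L2 \<ge> 0" "m \<ge> 0" "M \<ge> 0"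
    using \<omega>_nonneg by (auto simp: L2_def m_def M_def set_lebesgue_integral_def indicator_def
        besselK0_nonneg intro!: integral_nonneg_AE)
  have I2: "(\<integral>\<^sup>+x. ennreal ((w x)\<^sup>2) \<partial>lborel) = ennreal L2"
    using adm unfolding L2_def set_lebesgue_integral_def admissible_def set_integrable_def
    by (subst nn_integral_eq_integral[symmetric]) (auto intro!: nn_integral_cong simp: w_def indicator_def)
  have I1: "(\<integral>\<^sup>+x. ennreal (w x) \<partial>lborel) = ennreal m"
    using adm w_nonneg unfolding m_def set_lebesgue_integral_def admissible_def set_integrable_def w_def
    by (subst nn_integral_eq_integral) auto
  have "ennreal (2 * energy \<omega>)
      \<le> (\<integral>\<^sup>+x. ennreal (w x) * (\<integral>\<^sup>+y. ennreal (green_kernel (x - y)) * ennreal (w y) \<partial>lborel) \<partial>lborel)"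
    using ennreal_twice_energy_le[OF \<omega>_nonneg] by (simp add: w_def)
  also have "\<dots> \<le> 2 * emeasure green_measure (ball 0 d) * ennreal L2 + ennreal M * (ennreal m)\<^sup>2"
    using nn_integral_quadratic_form_le[of green_kernel w "ball 0 d" M] green_kernel_le[OF d] w_nonneg
    by (simp add: I1 I2 emeasure_green_measure M_def)
  also have "\<dots> = ennreal (2 * measure green_measure (ball 0 d) * L2 + M * m\<^sup>2)"
    using \<open>L2 \<ge> 0\<close> \<open>m \<ge> 0\<close> \<open>M \<ge> 0\<close>
    by (simp add: green_measure.emeasure_eq_measure ennreal_plus ennreal_mult ennreal_power)
  finally have "2 * energy \<omega> \<le> 2 * measure green_measure (ball 0 d) * L2 + M * m\<^sup>2"
    using \<open>L2 \<ge> 0\<close> \<open>m \<ge> 0\<close> \<open>M \<ge> 0\<close> by (subst (asm) ennreal_le_iff) auto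
  moreover have "M * m\<^sup>2 \<le> M * nu\<^sup>2"
    using \<open>m \<ge> 0\<close> \<open>m \<le> nu\<close> \<open>M \<ge> 0\<close> by (intro mult_left_mono power_mono) auto
  ultimately show ?thesis
    by (simp add: L2_def M_def)
qed

lemma penalized_energy_bounded:
  assumes "lam > 0"
  shows "\<exists>C. \<forall>mu nu \<omega>. \<omega> \<in> admissible mu nu \<longrightarrow> penalized_energy lam \<omega> \<le> C * nu\<^sup>2"
proof -
  obtain d where d: "d > 0" and small: "measure green_measure (ball 0 d) < 1 / (2 * lam)"
    using green_measure_small_ball[of "1 / (2 * lam)"] assms by auto
  show ?thesis
  proof (intro exI allI impI)
    fix mu nu \<omega> assume adm: "\<omega> \<in> admissible mu nu"
    define L2 where "L2 = (\<integral>x\<in>half_plane. (\<omega> x)\<^sup>2 \<partial>lborel)"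
    have "L2 \<ge> 0"
      unfolding L2_def set_lebesgue_integral_def by (intro integral_nonneg_AE) (auto simp: indicator_def)
    then have "measure green_measure (ball 0 d) * L2 \<le> 1 / (2 * lam) * L2"
      using small by (intro mult_right_mono) auto
    then show "penalized_energy lam \<omega> \<le> besselK0 d / (4 * pi) * nu\<^sup>2"
      using energy_le[OF adm d] unfolding penalized_energy_def L2_def by simp
  qed
qed

section \<open>Uniform vortex patches on squares\<close>

lemma borel_measurable_reflect [measurable]: "reflect \<in> borel_measurable borel"
  unfolding reflect_def[abs_def] by (intro borel_measurable_continuous_onI continuous_intros)

lemma stream_op_scaled_indicator:
  assumes [measurable]: "Q \<in> sets borel" and "Q \<subseteq> half_plane"
  shows "stream_op (\<lambda>y. c * indicator Q y) x
    = c * ((\<integral>y\<in>Q. green_kernel (x - y) \<partial>lborel) - (\<integral>y\<in>Q. green_kernel (reflect x - y) \<partial>lborel))"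
proof -
  have "stream_op (\<lambda>y. c * indicator Q y) x
      = (\<integral>y\<in>Q. c * (green_kernel (x - y) - green_kernel (reflect x - y)) \<partial>lborel)"
    unfolding stream_op_def set_lebesgue_integral_def using assms(2)
    by (intro Bochner_Integration.integral_cong) (auto simp: indicator_def green_half_def green_eq_green_kernel)
  then show ?thesis
    by (simp add: set_integrable_green_conv)
qed

lemma set_integrable_green_conv_measure:
  assumes [measurable]: "Q \<in> sets borel" "S \<in> sets borel" "f \<in> borel_measurable borel"
    and "emeasure lborel Q < \<infinity>"
  shows "set_integrable lborel Q (\<lambda>x. measure green_measure {z. f x - z \<in> S})"
proof -
  have "(\<lambda>x. measure green_measure {z. f x - z \<in> S}) = (\<lambda>x. \<integral>y\<in>S. green_kernel (f x - y) \<partial>lborel)"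
    by (simp add: set_integral_green_conv)
  also have "\<dots> \<in> borel_measurable borel"
    unfolding set_lebesgue_integral_def by measurable
  finally show ?thesis
    using assms(1,4) measure_green_measure_le_1 by (intro set_integrable_bounded[where B = 1]) auto
qed

lemma energy_scaled_indicator:
  assumes [measurable]: "Q \<in> sets borel" and "emeasure lborel Q < \<infinity>" "Q \<subseteq> half_plane"
  shows "energy (\<lambda>y. c * indicator Q y)
    = c\<^sup>2 / 2 * ((\<integral>x\<in>Q. measure green_measure {z. x - z \<in> Q} \<partial>lborel)
                 - (\<integral>x\<in>Q. measure green_measure {z. reflect x - z \<in> Q} \<partial>lborel))"
proof -
  have "stream_op (\<lambda>y. c * indicator Q y) x
      = c * (measure green_measure {z. x - z \<in> Q} - measure green_measure {z. reflect x - z \<in> Q})" for x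
    using stream_op_scaled_indicator[OF assms(1,3)] by (simp add: set_integral_green_conv)
  then have "energy (\<lambda>y. c * indicator Q y) = 1 / 2 * (\<integral>x\<in>Q. c\<^sup>2 *
      (measure green_measure {z. x - z \<in> Q} - measure green_measure {z. reflect x - z \<in> Q}) \<partial>lborel)"
    unfolding energy_def set_lebesgue_integral_def using assms(3)
    by (intro arg_cong[where f = "(*) (1 / 2)"] Bochner_Integration.integral_cong)
      (auto simp: indicator_def power2_eq_square)
  then show ?thesis
    using set_integrable_green_conv_measure[OF assms(1,1) _ assms(2), of "\<lambda>x. x"]
      set_integrable_green_conv_measure[OF assms(1,1) _ assms(2), of reflect]
    by (simp add: set_integral_diff(2))
qed

lemma measure_green_conv_ge:
  assumes [measurable]: "Q \<in> sets borel" "Q' \<in> sets borel"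
    and fin: "emeasure lborel Q < \<infinity>" and "Q' \<subseteq> Q" and inner: "\<And>x. x \<in> Q' \<Longrightarrow> ball x r \<subseteq> Q"
  shows "measure green_measure (ball 0 r) * measure lborel Q'
    \<le> (\<integral>x\<in>Q. measure green_measure {z. x - z \<in> Q} \<partial>lborel)"
proof -
  have fin': "emeasure lborel Q' < \<infinity>"
    using emeasure_mono[OF \<open>Q' \<subseteq> Q\<close>, of lborel] fin by simp
  have "measure green_measure (ball 0 r) * measure lborel Q' = (\<integral>x\<in>Q'. measure green_measure (ball 0 r) \<partial>lborel)"
    using fin' by (simp add: set_integral_const)
  also have "\<dots> = (\<integral>x\<in>Q. measure green_measure (ball 0 r) * indicator Q' x \<partial>lborel)"
    unfolding set_lebesgue_integral_def using \<open>Q' \<subseteq> Q\<close>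
    by (intro Bochner_Integration.integral_cong) (auto simp: indicator_def)
  also have "\<dots> \<le> (\<integral>x\<in>Q. measure green_measure {z. x - z \<in> Q} \<partial>lborel)"
  proof (intro set_integral_mono)
    show "set_integrable lborel Q (\<lambda>x. measure green_measure (ball 0 r) * indicator Q' x)"
      using fin by (intro set_integrable_bounded[where B = 1])
        (auto simp: indicator_def measure_green_measure_le_1)
    show "set_integrable lborel Q (\<lambda>x. measure green_measure {z. x - z \<in> Q})"
      using set_integrable_green_conv_measure[OF assms(1,1) _ fin, of "\<lambda>x. x"] by simp
    show "measure green_measure (ball 0 r) * indicator Q' x \<le> measure green_measure {z. x - z \<in> Q}" for x
    proof (cases "x \<in> Q'")
      case True
      have "ball 0 r \<subseteq> {z. x - z \<in> Q}"
      proof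
        fix z :: "real \<times> real" assume "z \<in> ball 0 r"
        then have "x - z \<in> ball x r" by (simp add: dist_norm)
        then show "z \<in> {z. x - z \<in> Q}" using inner[OF True] by blast
      qed
      then show ?thesis
        using True by (simp add: green_measure.finite_measure_mono)
    qed simp
  qed
  finally show ?thesis .
qed

lemma measure_green_conv_reflect_le:
  assumes [measurable]: "Q \<in> sets borel"
    and fin: "emeasure lborel Q < \<infinity>" and far: "\<And>x y. x \<in> Q \<Longrightarrow> y \<in> Q \<Longrightarrow> r \<le> dist (reflect x) y"
  shows "(\<integral>x\<in>Q. measure green_measure {z. reflect x - z \<in> Q} \<partial>lborel)
    \<le> measure green_measure (- ball 0 r) * measure lborel Q"
proof -
  have "(\<integral>x\<in>Q. measure green_measure {z. reflect x - z \<in> Q} \<partial>lborel)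
      \<le> (\<integral>x\<in>Q. measure green_measure (- ball 0 r) \<partial>lborel)"
  proof (intro set_integral_mono)
    show "set_integrable lborel Q (\<lambda>x. measure green_measure {z. reflect x - z \<in> Q})"
      by (rule set_integrable_green_conv_measure[OF assms(1,1) _ fin]) measurable
    show "set_integrable lborel Q (\<lambda>x. measure green_measure (- ball 0 r))"
      using fin by (simp add: set_integrable_def)
    show "measure green_measure {z. reflect x - z \<in> Q} \<le> measure green_measure (- ball 0 r)" if "x \<in> Q" for x
    proof -
      have "{z. reflect x - z \<in> Q} \<subseteq> - ball 0 r"
      proof
        fix z assume "z \<in> {z. reflect x - z \<in> Q}"
        then have "r \<le> dist (reflect x) (reflect x - z)" using far[OF that] by blast
        then show "z \<in> - ball 0 r" by (simp add: dist_norm)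
      qed
      then show ?thesis by (simp add: green_measure.finite_measure_mono)
    qed
  qed
  also have "\<dots> = measure green_measure (- ball 0 r) * measure lborel Q"
    using fin by (simp add: set_integral_const)
  finally show ?thesis .
qed

lemma energy_scaled_indicator_ge:
  assumes [measurable]: "Q \<in> sets borel" "Q' \<in> sets borel"
    and fin: "emeasure lborel Q < \<infinity>" and "Q \<subseteq> half_plane" "Q' \<subseteq> Q"
    and inner: "\<And>x. x \<in> Q' \<Longrightarrow> ball x r \<subseteq> Q"
    and far: "\<And>x y. x \<in> Q \<Longrightarrow> y \<in> Q \<Longrightarrow> r \<le> dist (reflect x) y"
  shows "c\<^sup>2 / 2 * (measure green_measure (ball 0 r) * measure lborel Q'
      - measure green_measure (- ball 0 r) * measure lborel Q) \<le> energy (\<lambda>y. c * indicator Q y)"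
  unfolding energy_scaled_indicator[OF assms(1) fin \<open>Q \<subseteq> half_plane\<close>]
  using measure_green_conv_ge[OF assms(1,2) fin \<open>Q' \<subseteq> Q\<close> inner]
    measure_green_conv_reflect_le[OF assms(1) fin far]
  by (intro mult_left_mono) auto

lemma borel_measurable_snd_plane [measurable]: "(snd :: real \<times> real \<Rightarrow> real) \<in> borel_measurable borel"
  by (intro borel_measurable_continuous_onI continuous_intros)

lemma abs_fst_le_norm: "\<bar>fst z\<bar> \<le> norm (z :: real \<times> real)"
  by (metis norm_fst_le prod.collapse real_norm_def)

lemma abs_snd_le_norm: "\<bar>snd z\<bar> \<le> norm (z :: real \<times> real)"
  by (metis norm_snd_le prod.collapse real_norm_def)

definition square :: "real \<Rightarrow> real \<Rightarrow> (real \<times> real) set" where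
  "square h R = {- R..R} \<times> {h - R..h + R}"

lemma sets_square [measurable]: "square h R \<in> sets borel"
  unfolding square_def by (intro borel_closed closed_Times closed_atLeastAtMost)

lemma emeasure_square: "0 \<le> R \<Longrightarrow> emeasure lborel (square h R) = ennreal (4 * R\<^sup>2)"
  by (simp add: square_def lborel_prod[symmetric] lborel.emeasure_pair_measure_Times ennreal_mult'[symmetric]
      power2_eq_square)

lemma measure_square: "0 \<le> R \<Longrightarrow> measure lborel (square h R) = 4 * R\<^sup>2"
  by (simp add: measure_def emeasure_square)

lemma nn_integral_snd_square:
  assumes "0 \<le> R" "R \<le> h"
  shows "(\<integral>\<^sup>+x\<in>square h R. ennreal (snd x) \<partial>lborel) = ennreal (4 * R\<^sup>2 * h)"
proof -
  have "(\<integral>\<^sup>+x\<in>square h R. ennreal (snd x) \<partial>lborel)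
      = (\<integral>\<^sup>+s\<in>{- R..R}. (\<integral>\<^sup>+t\<in>{h - R..h + R}. ennreal t \<partial>lborel) \<partial>lborel)"
    unfolding square_def by (subst lborel_prod[symmetric], subst lborel.nn_integral_fst[symmetric])
      (auto intro!: nn_integral_cong simp: indicator_def)
  also have "(\<integral>\<^sup>+t\<in>{h - R..h + R}. ennreal t \<partial>lborel) = ennreal (2 * R * h)"
    using assms by (subst nn_integral_FTC_Icc[where F = "\<lambda>t. t\<^sup>2 / 2"])
      (auto intro!: derivative_eq_intros simp: power2_eq_square field_simps)
  finally show ?thesis
    using assms by (simp add: nn_integral_cmult_indicator ennreal_mult'[symmetric] power2_eq_square)
qed

lemma
  assumes "0 \<le> R" "R \<le> h"
  shows set_integrable_snd_square: "set_integrable lborel (square h R) snd"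
    and set_integral_snd_square: "(\<integral>x\<in>square h R. snd x \<partial>lborel) = 4 * R\<^sup>2 * h"
proof -
  have snd_nn: "(\<integral>\<^sup>+x. ennreal (indicator (square h R) x *\<^sub>R snd x) \<partial>lborel) = ennreal (4 * R\<^sup>2 * h)"
  proof -
    have "(\<integral>\<^sup>+x. ennreal (indicator (square h R) x *\<^sub>R snd x) \<partial>lborel)
        = (\<integral>\<^sup>+x\<in>square h R. ennreal (snd x) \<partial>lborel)"
      by (intro nn_integral_cong) (simp add: indicator_def)
    then show ?thesis
      using nn_integral_snd_square[OF assms] by simp
  qed
  have snd_nonneg: "0 \<le> indicator (square h R) x *\<^sub>R snd x" for x
    using assms by (auto simp: square_def indicator_def)
  show int: "set_integrable lborel (square h R) snd"
    unfolding set_integrable_def using snd_nn snd_nonneg by (intro integrableI_nonneg) auto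
  show "(\<integral>x\<in>square h R. snd x \<partial>lborel) = 4 * R\<^sup>2 * h"
    using nn_integral_eq_integral[OF int[unfolded set_integrable_def]] snd_nn snd_nonneg assms
    by (simp add: set_lebesgue_integral_def)
qed

lemma square_subset_half_plane: "R < h \<Longrightarrow> square h R \<subseteq> half_plane"
  by (auto simp: square_def half_plane_def)

lemma square_mono: "R' \<le> R \<Longrightarrow> square h R' \<subseteq> square h R"
  by (auto simp: square_def)

lemma ball_subset_square:
  assumes "x \<in> square h (R - r)"
  shows "ball x r \<subseteq> square h R"
proof
  fix y assume "y \<in> ball x r"
  then have "\<bar>fst x - fst y\<bar> < r" "\<bar>snd x - snd y\<bar> < r"
    using abs_fst_le_norm[of "x - y"] abs_snd_le_norm[of "x - y"] by (auto simp: dist_norm)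
  then show "y \<in> square h R"
    using assms by (cases y) (auto simp: square_def)
qed

lemma dist_reflect_square:
  assumes "x \<in> square h R" "y \<in> square h R"
  shows "2 * (h - R) \<le> dist (reflect x) y"
proof -
  have "2 * (h - R) \<le> \<bar>snd (reflect x - y)\<bar>"
    using assms by (auto simp: square_def reflect_def)
  also have "\<dots> \<le> dist (reflect x) y"
    using abs_snd_le_norm[of "reflect x - y"] by (simp add: dist_norm)
  finally show ?thesis .
qed

lemma scaled_square_admissible:
  assumes "0 < R" "R < h" "0 \<le> mu" "mu \<le> h * nu"
  shows "(\<lambda>x. mu / (4 * R\<^sup>2 * h) * indicator (square h R) x) \<in> admissible mu nu"
proof -
  define c where "c = mu / (4 * R\<^sup>2 * h)"
  define Q where "Q = square h R"
  have [measurable]: "Q \<in> sets borel" unfolding Q_def by measurable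
  have QP: "Q \<subseteq> half_plane" using square_subset_half_plane[OF assms(2)] by (simp add: Q_def)
  have c: "c \<ge> 0" "c * (4 * R\<^sup>2 * h) = mu" "c * (4 * R\<^sup>2) \<le> nu"
    using assms by (auto simp: c_def field_simps)
  have fin: "emeasure lborel Q < \<infinity>" and mQ: "measure lborel Q = 4 * R\<^sup>2"
    using assms by (simp_all add: Q_def emeasure_square measure_square)
  have snd_int: "set_integrable lborel Q snd" and snd_integral: "(\<integral>x\<in>Q. snd x \<partial>lborel) = 4 * R\<^sup>2 * h"
    using assms by (simp_all add: Q_def set_integrable_snd_square set_integral_snd_square)
  have sq: "(\<lambda>x. (c * indicator Q x)\<^sup>2) = (\<lambda>x. c\<^sup>2 * indicator Q x)"
    by (auto simp: indicator_def)
  have imp: "(\<lambda>x. snd x * (c * indicator Q x)) = (\<lambda>x. c * snd x * indicator Q x)"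
    by (auto simp: indicator_def)
  have "(\<lambda>x. c * indicator Q x) \<in> admissible mu nu"
    unfolding admissible_def impulse_def
  proof (intro CollectI conjI)
    show "(\<lambda>x. c * indicator Q x) \<in> borel_measurable lborel"
      by measurable
    show "\<forall>x\<in>half_plane. 0 \<le> c * indicator Q x"
      using c by simp
    show "set_integrable lborel half_plane (\<lambda>x. (c * indicator Q x)\<^sup>2)"
      unfolding sq using fin by (subst set_integrable_mult_indicator_subset[OF QP]) (simp add: set_integrable_def)
    show "set_integrable lborel half_plane (\<lambda>x. snd x * (c * indicator Q x))"
      unfolding imp using snd_int by (simp add: set_integrable_mult_indicator_subset[OF QP])
    show "(\<integral>x\<in>half_plane. snd x * (c * indicator Q x) \<partial>lborel) = mu"
      unfolding imp using snd_integral c by (simp add: set_integral_mult_indicator_subset[OF QP])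
    show "set_integrable lborel half_plane (\<lambda>x. c * indicator Q x)"
      using fin by (subst set_integrable_mult_indicator_subset[OF QP]) (simp add: set_integrable_def)
    show "(\<integral>x\<in>half_plane. c * indicator Q x \<partial>lborel) \<le> nu"
      using fin mQ c
      by (subst set_integral_mult_indicator_subset[OF QP]) (simp add: set_integral_const mult.commute)
  qed
  then show ?thesis by (simp add: c_def Q_def)
qed

lemma square_energy_margin:
  fixes T \<eta> :: real
  assumes "0 \<le> T" "T < \<eta>" "\<eta> < 1 / 4"
  shows "1 - 4 * \<eta> < (1 - T) * (1 - \<eta> / 2)\<^sup>2 - T"
proof -
  have "(1 - T) * (1 - \<eta>) \<le> (1 - T) * (1 - \<eta> / 2)\<^sup>2"
    using assms by (intro mult_left_mono) (auto simp: power2_eq_square algebra_simps)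
  moreover have "(1 - T) * (1 - \<eta>) = 1 - \<eta> - T + T * \<eta>"
    by (simp add: algebra_simps)
  moreover have "0 \<le> T * \<eta>"
    using assms by simp
  ultimately show ?thesis
    using assms by linarith
qed

lemma energy_square_patch_ge:
  assumes "0 < r" "r \<le> R" "r \<le> h - R"
  shows "c\<^sup>2 / 2 * ((1 - measure green_measure (- ball 0 r)) * (4 * (R - r)\<^sup>2)
      - measure green_measure (- ball 0 r) * (4 * R\<^sup>2)) \<le> energy (\<lambda>x. c * indicator (square h R) x)"
proof -
  have "R < h" using assms by simp
  have "c\<^sup>2 / 2 * (measure green_measure (ball 0 r) * measure lborel (square h (R - r))
      - measure green_measure (- ball 0 r) * measure lborel (square h R))
      \<le> energy (\<lambda>x. c * indicator (square h R) x)"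
  proof (rule energy_scaled_indicator_ge)
    show "emeasure lborel (square h R) < \<infinity>" using assms by (simp add: emeasure_square)
    show "square h R \<subseteq> half_plane" using \<open>R < h\<close> by (rule square_subset_half_plane)
    show "square h (R - r) \<subseteq> square h R" using assms by (intro square_mono) simp
    show "ball x r \<subseteq> square h R" if "x \<in> square h (R - r)" for x
      using ball_subset_square[OF that] .
    show "r \<le> dist (reflect x) y" if "x \<in> square h R" "y \<in> square h R" for x y
      using dist_reflect_square[OF that] assms by simp
  qed simp_all
  then show ?thesis
    using assms measure_green_measure_compl[of "ball 0 r"] by (simp add: measure_square)
qed

lemma set_integral_square_patch_sq:
  assumes "0 \<le> R" "R < h"
  shows "(\<integral>x\<in>half_plane. (c * indicator (square h R) x)\<^sup>2 \<partial>lborel) = c\<^sup>2 * (4 * R\<^sup>2)"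
proof -
  have "(\<lambda>x. (c * indicator (square h R) x)\<^sup>2) = (\<lambda>x. c\<^sup>2 * indicator (square h R) x)"
    by (auto simp: indicator_def)
  then show ?thesis
    using assms by (simp only:) (subst set_integral_mult_indicator_subset[OF square_subset_half_plane],
        simp_all add: set_integral_const emeasure_square measure_square mult.commute)
qed

lemma exists_admissible_positive_penalized_energy:
  assumes lam: "lam > 1" and "mu > 0" "nu > 0"
  shows "\<exists>\<omega>\<in>admissible mu nu. 0 < penalized_energy lam \<omega>"
proof -
  define \<eta> where "\<eta> = (1 - 1 / lam) / 4"
  have \<eta>: "0 < \<eta>" "\<eta> < 1 / 4" "1 - 4 * \<eta> = 1 / lam"
    using lam by (auto simp: \<eta>_def field_simps)
  obtain r where r: "r > 0" and tail: "measure green_measure (- ball 0 r) < \<eta>"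
    using green_measure_small_tail[OF \<eta>(1)] by blast
  define T where "T = measure green_measure (- ball 0 r)"
  define R where "R = 2 * r / \<eta>"
  define h where "h = R + r + mu / nu"
  define c where "c = mu / (4 * R\<^sup>2 * h)"
  have R: "R > 0" "R - r = R * (1 - \<eta> / 2)" "r \<le> R"
    using r \<eta> by (auto simp: R_def field_simps)
  have "0 < mu / nu" using \<open>mu > 0\<close> \<open>nu > 0\<close> by simp
  then have h: "r \<le> h - R" "R < h" "mu / nu \<le> h"
    using r R by (auto simp: h_def)
  then have "mu \<le> h * nu" using \<open>nu > 0\<close> by (simp add: divide_le_eq)
  have "c > 0" using \<open>mu > 0\<close> R h by (simp add: c_def)
  have adm: "(\<lambda>x. c * indicator (square h R) x) \<in> admissible mu nu"
    using scaled_square_admissible[OF R(1) h(2) _ \<open>mu \<le> h * nu\<close>] \<open>mu > 0\<close> by (simp add: c_def)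
  have "4 * R\<^sup>2 / lam < (1 - T) * (4 * (R - r)\<^sup>2) - T * (4 * R\<^sup>2)"
  proof -
    have "1 / lam < (1 - T) * (1 - \<eta> / 2)\<^sup>2 - T"
      using square_energy_margin[of T \<eta>] tail \<eta> by (simp add: T_def)
    from mult_strict_left_mono[OF this, of "4 * R\<^sup>2"] R(1)
    have "4 * R\<^sup>2 * (1 / lam) < 4 * R\<^sup>2 * ((1 - T) * (1 - \<eta> / 2)\<^sup>2 - T)" by simp
    moreover have "(R - r)\<^sup>2 = R\<^sup>2 * (1 - \<eta> / 2)\<^sup>2"
      by (simp add: R(2) power_mult_distrib)
    ultimately show ?thesis
      by (simp add: algebra_simps)
  qed
  then have "c\<^sup>2 / 2 * (4 * R\<^sup>2 / lam) < c\<^sup>2 / 2 * ((1 - T) * (4 * (R - r)\<^sup>2) - T * (4 * R\<^sup>2))"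
    using \<open>c > 0\<close> by (intro mult_strict_left_mono) auto
  then have "0 < penalized_energy lam (\<lambda>x. c * indicator (square h R) x)"
    using energy_square_patch_ge[OF r R(3) h(1), of c] set_integral_square_patch_sq[of R h c] R h
    unfolding penalized_energy_def T_def by simp
  then show ?thesis using adm by blast
qed

theorem lemma3p5:
  fixes lam nu :: real
  assumes "lam > 1" and "nu > 0"
  shows "\<exists>C::real. \<forall>mu>0. mu * rho lam \<le> nu \<longrightarrow>
           0 < S_sup mu nu lam \<and> S_sup mu nu lam \<le> ereal C"
proof -
  obtain C where C: "\<And>mu \<omega>. \<omega> \<in> admissible mu nu \<Longrightarrow> penalized_energy lam \<omega> \<le> C * nu\<^sup>2"
    using penalized_energy_bounded[of lam] assms(1) by force
  show ?thesis
  proof (intro exI[of _ "C * nu\<^sup>2"] allI impI conjI)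
    fix mu :: real assume "mu > 0"
    then obtain \<omega> where \<omega>: "\<omega> \<in> admissible mu nu" "0 < penalized_energy lam \<omega>"
      using exists_admissible_positive_penalized_energy assms by blast
    have "ereal (penalized_energy lam \<omega>) \<le> S_sup mu nu lam"
      unfolding S_sup_def by (rule SUP_upper[OF \<omega>(1)])
    moreover have "(0 :: ereal) < ereal (penalized_energy lam \<omega>)"
      using \<omega>(2) by simp
    ultimately show "0 < S_sup mu nu lam"
      by (rule order_less_le_trans[rotated])
    show "S_sup mu nu lam \<le> ereal (C * nu\<^sup>2)"
      unfolding S_sup_def using C by (auto intro!: SUP_least)
  qed
qed

end
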